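(* Let $u\in\mathcal{B}^N$, $m\in\mathbb{R}$, $\varepsilon>0$, $(r,\sigma)\in F(N,A,u,m)$ and $(t,\sigma)\in F(N,A,u,m-\varepsilon)$ such that $r_a>t_a$ for each $a\in A$. Suppose there is no $i\in N$ and $a\in A$ with $r_a>b_i>t_a$. Then $\sigma$ is a maximum weight perfect matching in $\mathcal{F}^u(r)$.
   Context: Fix a finite set $\{\rho_1,\dots,\rho_k\}\subseteq\mathbb{R}_+$ with $\rho_1=0$. $N=\{1,\dots,n\}$ agents, $A$ a set of $n$ rooms. $\mathcal{B}$ is the set of utility functions $u_i(r_a,a)=v^i_a-r_a-\rho_i\max\{0,r_a-b_i\}$ with $v^i\in\mathbb{R}^A$, $b_i\ge0$, $\rho_i\in\{\rho_1,\dots,\rho_k\}$. An allocation for $(N,A,u,m)$ is $(r,\sigma)$ with $\sigma:N\to A$ a bijection, $r\in\mathbb{R}^A$, $\sum_ar_a=m$; envy-free means $u_i(r_{\sigma(i)},\sigma(i))\ge u_i(r_{\sigma(j)},\sigma(j))$ for all $i,j$; $F(N,A,u,m)$ is the set of envy-free allocations. $\lambda_{ia}(u,r):=1+\rho_i$ if $r_a>b_i$, else $1$. For $r$ with some envy-free $(r,\sigma)$, $\mathcal{F}(r)$ is the bipartite graph on $N\cup A$ with edge $(i,a)$ iff $u_i(r_{\sigma(i)},\sigma(i))=u_i(r_a,a)$, and $\mathcal{F}^u(r)$ is this graph with weights $w(i,a)=\log\lambda_{ia}(u,r)$; a maximum weight perfect matching is a bijection $\mu:N\to A$ using only edges of $\mathcal{F}(r)$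 and maximizing $\sum_iw(i,\mu(i))$ among such. *)

theory Defs
  imports "HOL-Analysis.Analysis"
begin

definition util :: "('i \<Rightarrow> 'a \<Rightarrow> real) \<Rightarrow> ('i \<Rightarrow> real) \<Rightarrow> ('i \<Rightarrow> real)
    \<Rightarrow> 'i \<Rightarrow> real \<Rightarrow> 'a \<Rightarrow> real" where
  "util v b rho i x a = v i a - x - rho i * max 0 (x - b i)"

definition in_class_B :: "real set \<Rightarrow> 'i set \<Rightarrow> 'a set \<Rightarrow> ('i \<Rightarrow> 'a \<Rightarrow> real)
    \<Rightarrow> ('i \<Rightarrow> real) \<Rightarrow> ('i \<Rightarrow> real) \<Rightarrow> bool" where
  "in_class_B Rhos N A v b rho \<longleftrightarrow> (\<forall>i\<in>N. b i \<ge> 0 \<and> rho i \<in> Rhos)"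

definition envy_free :: "'i set \<Rightarrow> 'a set \<Rightarrow> ('i \<Rightarrow> real \<Rightarrow> 'a \<Rightarrow> real) \<Rightarrow> real
    \<Rightarrow> ('a \<Rightarrow> real) \<Rightarrow> ('i \<Rightarrow> 'a) \<Rightarrow> bool" where
  "envy_free N A u m r \<sigma> \<longleftrightarrow>
     bij_betw \<sigma> N A \<and> (\<Sum>a\<in>A. r a) = m \<and>
     (\<forall>i\<in>N. \<forall>j\<in>N. u i (r (\<sigma> i)) (\<sigma> i) \<ge> u i (r (\<sigma> j)) (\<sigma> j))"

definition lam :: "('i \<Rightarrow> real) \<Rightarrow> ('i \<Rightarrow> real) \<Rightarrow> ('a \<Rightarrow> real) \<Rightarrow> 'i \<Rightarrow> 'a \<Rightarrow> real" where
  "lam b rho r i a = (if r a > b i then 1 + rho i else 1)"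

definition F_edge :: "'i set \<Rightarrow> 'a set \<Rightarrow> ('i \<Rightarrow> real \<Rightarrow> 'a \<Rightarrow> real) \<Rightarrow> ('a \<Rightarrow> real)
    \<Rightarrow> ('i \<Rightarrow> 'a) \<Rightarrow> 'i \<Rightarrow> 'a \<Rightarrow> bool" where
  "F_edge N A u r \<sigma> i a \<longleftrightarrow> i \<in> N \<and> a \<in> A \<and> u i (r (\<sigma> i)) (\<sigma> i) = u i (r a) a"

definition perfect_matching_in_F :: "'i set \<Rightarrow> 'a set \<Rightarrow> ('i \<Rightarrow> real \<Rightarrow> 'a \<Rightarrow> real)
    \<Rightarrow> ('a \<Rightarrow> real) \<Rightarrow> ('i \<Rightarrow> 'a) \<Rightarrow> ('i \<Rightarrow> 'a) \<Rightarrow> bool" where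
  "perfect_matching_in_F N A u r \<sigma> \<mu> \<longleftrightarrow>
     bij_betw \<mu> N A \<and> (\<forall>i\<in>N. F_edge N A u r \<sigma> i (\<mu> i))"

definition max_weight_pm :: "'i set \<Rightarrow> 'a set \<Rightarrow> ('i \<Rightarrow> real \<Rightarrow> 'a \<Rightarrow> real)
    \<Rightarrow> ('i \<Rightarrow> real) \<Rightarrow> ('i \<Rightarrow> real) \<Rightarrow> ('a \<Rightarrow> real) \<Rightarrow> ('i \<Rightarrow> 'a) \<Rightarrow> ('i \<Rightarrow> 'a) \<Rightarrow> bool" where
  "max_weight_pm N A u b rho r \<sigma> \<mu> \<longleftrightarrow>
     perfect_matching_in_F N A u r \<sigma> \<mu> \<and>
     (\<forall>\<mu>'. perfect_matching_in_F N A u r \<sigma> \<mu>' \<longrightarrow>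
        (\<Sum>i\<in>N. ln (lam b rho r i (\<mu>' i))) \<le> (\<Sum>i\<in>N. ln (lam b rho r i (\<mu> i))))"

end

theory Submission
  imports Defs
begin

text \<open>Since no budget lies strictly between t a and r a, lowering the rent of
  room a from r a to t a raises every agent's utility for it by exactly
  lam i a * (r a - t a). Agent i is indifferent at r between its own room and the room it gets
  in any perfect matching mu of F(r), and by envy-freeness at t it weakly prefers its own room
  there, so lam i (mu i) * d (mu i) <= lam i (sigma i) * d (sigma i) with d = r - t. Taking
  logarithms and summing over i, the terms ln d cancel because mu and sigma are both
  bijections onto the rooms.\<close>

lemma util_gap_eq_lam:
  assumes "t a < r a" and "\<not> (r a > b i \<and> b i > t a)"
  shows "util v b rho i (t a) a - util v b rho i (r a) a = lam b rho r i a * (r a - t a)"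
  using assms unfolding util_def lam_def
  by (auto simp: max_def algebra_simps)

lemma lam_pos: "rho i \<ge> 0 \<Longrightarrow> lam b rho r i a > 0"
  by (simp add: lam_def)

lemma lam_gap_le_of_indifferent:
  assumes "util v b rho i (r a) a = util v b rho i (r c) c"
    and "util v b rho i (t c) c \<le> util v b rho i (t a) a"
    and "t a < r a" "t c < r c"
    and "\<not> (r a > b i \<and> b i > t a)" "\<not> (r c > b i \<and> b i > t c)"
  shows "lam b rho r i c * (r c - t c) \<le> lam b rho r i a * (r a - t a)"
  using util_gap_eq_lam[of t a r b i v rho] util_gap_eq_lam[of t c r b i v rho] assms
  by linarith

lemma sum_ln_le_of_bij_mult_le:
  fixes w :: "'i \<Rightarrow> 'a \<Rightarrow> real" and d :: "'a \<Rightarrow> real"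
  assumes \<mu>: "bij_betw \<mu> N A" and \<sigma>: "bij_betw \<sigma> N A"
    and w_pos: "\<forall>i\<in>N. \<forall>a\<in>A. w i a > 0" and d_pos: "\<forall>a\<in>A. d a > 0"
    and le: "\<forall>i\<in>N. w i (\<mu> i) * d (\<mu> i) \<le> w i (\<sigma> i) * d (\<sigma> i)"
  shows "(\<Sum>i\<in>N. ln (w i (\<mu> i))) \<le> (\<Sum>i\<in>N. ln (w i (\<sigma> i)))"
proof -
  have ln_le: "ln (w i (\<mu> i)) + ln (d (\<mu> i)) \<le> ln (w i (\<sigma> i)) + ln (d (\<sigma> i))"
    if "i \<in> N" for i
  proof -
    have "\<mu> i \<in> A" "\<sigma> i \<in> A"
      using \<mu> \<sigma> that by (auto dest: bij_betw_apply)
    with that w_pos d_pos have pos: "w i (\<mu> i) > 0" "d (\<mu> i) > 0" "w i (\<sigma> i) > 0" "d (\<sigma> i) > 0"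
      by auto
    have "ln (w i (\<mu> i) * d (\<mu> i)) \<le> ln (w i (\<sigma> i) * d (\<sigma> i))"
      using that le pos by simp
    with pos show ?thesis
      by (simp add: ln_mult)
  qed
  have "(\<Sum>i\<in>N. ln (d (\<mu> i))) = (\<Sum>i\<in>N. ln (d (\<sigma> i)))"
    using sum.reindex_bij_betw[OF \<mu>, of "\<lambda>a. ln (d a)"]
      sum.reindex_bij_betw[OF \<sigma>, of "\<lambda>a. ln (d a)"] by simp
  moreover have "(\<Sum>i\<in>N. ln (w i (\<mu> i)) + ln (d (\<mu> i))) \<le> (\<Sum>i\<in>N. ln (w i (\<sigma> i)) + ln (d (\<sigma> i)))"
    using ln_le by (rule sum_mono)
  ultimately show ?thesis
    by (simp add: sum.distrib)
qed

lemma envy_free_perfect_matching_self: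
  "envy_free N A u m r \<sigma> \<Longrightarrow> perfect_matching_in_F N A u r \<sigma> \<sigma>"
  by (auto simp: envy_free_def perfect_matching_in_F_def F_edge_def dest: bij_betw_apply)

lemma perfect_matching_lam_gap_le:
  assumes envy_t: "envy_free N A (util v b rho) m' t \<sigma>"
    and matching: "perfect_matching_in_F N A (util v b rho) r \<sigma> \<mu>"
    and gap: "\<forall>a\<in>A. r a > t a"
    and no_budget_between: "\<not> (\<exists>i\<in>N. \<exists>a\<in>A. r a > b i \<and> b i > t a)"
    and i: "i \<in> N"
  shows "lam b rho r i (\<mu> i) * (r (\<mu> i) - t (\<mu> i))
    \<le> lam b rho r i (\<sigma> i) * (r (\<sigma> i) - t (\<sigma> i))"
proof -
  have \<sigma>: "bij_betw \<sigma> N A"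
    using envy_t by (simp add: envy_free_def)
  have \<mu>: "bij_betw \<mu> N A"
    using matching by (simp add: perfect_matching_in_F_def)
  then obtain j where "j \<in> N" "\<sigma> j = \<mu> i"
    using \<sigma> i by (metis bij_betw_apply bij_betw_imp_surj_on imageE)
  with i envy_t have "util v b rho i (t (\<mu> i)) (\<mu> i) \<le> util v b rho i (t (\<sigma> i)) (\<sigma> i)"
    unfolding envy_free_def by metis
  with i matching \<mu> \<sigma> gap no_budget_between show ?thesis
    by (intro lam_gap_le_of_indifferent)
      (auto simp: perfect_matching_in_F_def F_edge_def dest: bij_betw_apply)
qed

theorem lemma4:
  fixes N :: "'i set" and A :: "'a set" and Rhos :: "real set"
    and v :: "'i \<Rightarrow> 'a \<Rightarrow> real" and b rho :: "'i \<Rightarrow> real"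
    and m \<epsilon> :: real and r t :: "'a \<Rightarrow> real" and \<sigma> :: "'i \<Rightarrow> 'a"
  assumes "finite Rhos" and "0 \<in> Rhos" and "\<forall>x\<in>Rhos. x \<ge> 0"
    and "finite N" and "finite A" and "card N = card A"
    and "in_class_B Rhos N A v b rho"
    and "\<epsilon> > 0"
    and "envy_free N A (util v b rho) m r \<sigma>"
    and "envy_free N A (util v b rho) (m - \<epsilon>) t \<sigma>"
    and "\<forall>a\<in>A. r a > t a"
    and "\<not> (\<exists>i\<in>N. \<exists>a\<in>A. r a > b i \<and> b i > t a)"
  shows "max_weight_pm N A (util v b rho) b rho r \<sigma> \<sigma>"
proof -
  have \<sigma>: "bij_betw \<sigma> N A"
    using assms(9) by (simp add: envy_free_def)
  have lam_pos_on: "\<forall>i\<in>N. \<forall>a\<in>A. lam b rho r i a > 0"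
    using assms(3,7) by (auto simp: in_class_B_def intro: lam_pos)
  have "(\<Sum>i\<in>N. ln (lam b rho r i (\<mu> i))) \<le> (\<Sum>i\<in>N. ln (lam b rho r i (\<sigma> i)))"
    if "perfect_matching_in_F N A (util v b rho) r \<sigma> \<mu>" for \<mu>
  proof (rule sum_ln_le_of_bij_mult_le[where d = "\<lambda>a. r a - t a"])
    show "bij_betw \<mu> N A"
      using that by (simp add: perfect_matching_in_F_def)
    show "\<forall>i\<in>N. lam b rho r i (\<mu> i) * (r (\<mu> i) - t (\<mu> i))
        \<le> lam b rho r i (\<sigma> i) * (r (\<sigma> i) - t (\<sigma> i))"
      using perfect_matching_lam_gap_le[OF assms(10) that assms(11,12)] by blast
  qed (use \<sigma> lam_pos_on assms(11) in auto)
  with assms(9) show ?thesis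
    by (simp add: max_weight_pm_def envy_free_perfect_matching_self)
qed

end
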